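(* Fix $\epsilon\in(0,\mu)$ and, for $s\in\{1,2,\dots\}$, let $$\kappa(V)=\inf\{k\ge1:\ V_{n+1}\le n(\mu-\epsilon)/s\ \text{for all } n\ge k\}.$$ If $EV_1^q<\infty$ for some $q>2$, then $E\kappa(V)=O(s^{q/(q-1)})$ as $s\to\infty$.
   Context: $(V_n)_{n\ge1}$ are i.i.d. nonnegative random variables (service times; their law does not depend on $s$), and $\mu>0$ is a fixed constant (the mean interarrival time of the base system). $\inf\emptyset=\infty$. *)

theory Defs
  imports "HOL-Probability.Probability"
begin

definition kappa :: "real \<Rightarrow> real \<Rightarrow> nat \<Rightarrow> (nat \<Rightarrow> 'a \<Rightarrow> real) \<Rightarrow> 'a \<Rightarrow> enat" where
  "kappa mu eps s V \<omega> =
     Inf {enat k | k. k \<ge> 1 \<and> (\<forall>n\<ge>k. V (Suc n) \<omega> \<le> real n * (mu - eps) / real s)}"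

end

theory Submission
  imports Defs
begin

text \<open>
  If V (n + 1) > n (mu - eps) / s for some n \<ge> K, then kappa is at most one more than the
  largest such n, so kappa \<le> K + \<Sum>n\<ge>K. n \<cdot> 1{V (n + 1) > n (mu - eps) / s}. Markov's
  inequality of order q bounds the n-th expectation by (s / (mu - eps))^q E V^q n^(1 - q), whose
  tail sum from K is O(s^q K^(2 - q)); taking K \<approx> s^(q / (q - 1)) balances the two terms.
\<close>

lemma powr_shift_le_powr_diff:
  fixes x p :: real
  assumes "x > 0" "p > 1"
  shows "(x + 1) powr - p \<le> (x powr (1 - p) - (x + 1) powr (1 - p)) / (p - 1)"
proof -
  have "\<And>y. x \<le> y \<and> y \<le> x + 1 \<Longrightarrow>
      ((\<lambda>z. z powr (1 - p)) has_real_derivative (1 - p) * y powr - p) (at y)"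
    using assms has_real_derivative_powr[of _ "1 - p"] by auto
  then obtain z where z: "x < z" "z < x + 1"
      and mvt: "(x + 1) powr (1 - p) - x powr (1 - p) = (x + 1 - x) * ((1 - p) * z powr - p)"
    using MVT2[of x "x + 1" "\<lambda>z. z powr (1 - p)" "\<lambda>y. (1 - p) * y powr - p"] by auto
  have "(x + 1) powr - p \<le> z powr - p"
    using z assms by (intro powr_mono2') auto
  also have "\<dots> = (x powr (1 - p) - (x + 1) powr (1 - p)) / (p - 1)"
    using mvt assms by (simp add: field_simps)
  finally show ?thesis .
qed

lemma sum_powr_tail_le:
  fixes p :: real
  assumes "p > 1" "m > 0"
  shows "(\<Sum>n = Suc m..<N. real n powr - p) \<le> real m powr (1 - p) / (p - 1)"
proof (cases "Suc m \<le> N")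
  case True
  define F where "F i = real i powr (1 - p) / (p - 1)" for i
  have "(\<Sum>n = Suc m..<N. real n powr - p) = (\<Sum>i = m..<N - 1. (real i + 1) powr - p)"
    using True sum.shift_bounds_Suc_ivl[of "\<lambda>n. real n powr - p" m "N - 1"] by (simp add: add.commute)
  also have "\<dots> \<le> (\<Sum>i = m..<N - 1. F i - F (Suc i))"
  proof (intro sum_mono)
    fix i assume "i \<in> {m..<N - 1}"
    then show "(real i + 1) powr - p \<le> F i - F (Suc i)"
      using assms powr_shift_le_powr_diff[of "real i" p] by (simp add: F_def diff_divide_distrib ac_simps)
  qed
  also have "\<dots> = F m - F (N - 1)"
    using True sum_Suc_diff'[of m "N - 1" "\<lambda>i. - F i"] by simp
  also have "\<dots> \<le> F m"
    using assms by (simp add: F_def)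
  finally show ?thesis unfolding F_def .
qed (use assms in simp)

lemma suminf_powr_tail_le:
  fixes p :: real
  assumes "p > 1" "m > 0"
  shows "(\<Sum>n. ennreal (if Suc m \<le> n then real n powr - p else 0))
           \<le> ennreal (real m powr (1 - p) / (p - 1))"
proof (rule suminf_le_const[OF summableI])
  fix N
  have "{n \<in> {..<N}. Suc m \<le> n} = {Suc m..<N}"
    by auto
  then have "(\<Sum>n<N. ennreal (if Suc m \<le> n then real n powr - p else 0))
               = ennreal (\<Sum>n = Suc m..<N. real n powr - p)"
    by (simp flip: sum.inter_filter)
  also have "\<dots> \<le> ennreal (real m powr (1 - p) / (p - 1))"
    using sum_powr_tail_le[OF assms] by (rule ennreal_leI)
  finally show "(\<Sum>n<N. ennreal (if Suc m \<le> n then real n powr - p else 0))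
                  \<le> ennreal (real m powr (1 - p) / (p - 1))" .
qed

lemma kappa_le:
  assumes "k \<ge> 1" "\<forall>n\<ge>k. V (Suc n) x \<le> real n * (mu - eps) / real s"
  shows "kappa mu eps s V x \<le> enat k"
  unfolding kappa_def using assms by (intro Inf_lower) blast

lemma ennreal_le_suminf: "(f n :: ennreal) \<le> suminf f"
  using sum_le_suminf[OF summableI, of "{n}" f] by simp

lemma finite_if_suminf_index_finite:
  assumes "R \<ge> 0" "(\<Sum>i. ennreal (if i \<in> B then real i else 0)) = ennreal R"
  shows "finite B"
proof (rule finite_subset)
  show "B \<subseteq> {..nat \<lceil>R\<rceil>}"
  proof
    fix n assume "n \<in> B"
    have "ennreal (if n \<in> B then real n else 0) \<le> ennreal R"
      unfolding assms(2)[symmetric] by (rule ennreal_le_suminf)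
    then have "real n \<le> R"
      using \<open>n \<in> B\<close> \<open>R \<ge> 0\<close> by simp
    then show "n \<in> {..nat \<lceil>R\<rceil>}"
      by (simp add: le_nat_iff le_ceiling_iff)
  qed
qed simp

lemma kappa_le_sum_exceedances:
  assumes "K \<ge> 1"
  shows "ennreal_of_enat (kappa mu eps s V x) \<le> of_nat K +
     (\<Sum>n. ennreal (if K \<le> n \<and> real n * (mu - eps) / real s < V (Suc n) x then real n else 0))"
proof -
  define B where "B = {n. K \<le> n \<and> real n * (mu - eps) / real s < V (Suc n) x}"
  define S where "S = (\<Sum>n. ennreal (if n \<in> B then real n else 0))"
  have kappa_le_B: "ennreal_of_enat (kappa mu eps s V x) \<le> of_nat k"
    if "k \<ge> K" "\<forall>n\<ge>k. n \<notin> B" for k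
  proof -
    have "kappa mu eps s V x \<le> enat k"
      using that \<open>K \<ge> 1\<close> by (intro kappa_le) (auto simp: B_def not_less)
    then have "ennreal_of_enat (kappa mu eps s V x) \<le> ennreal_of_enat (enat k)"
      by (simp only: ennreal_of_enat_le_iff)
    then show ?thesis
      by simp
  qed
  have "ennreal_of_enat (kappa mu eps s V x) \<le> of_nat K + S"
  proof (cases S)
    case (real R)
    then have "finite B"
      unfolding S_def by (rule finite_if_suminf_index_finite)
    show ?thesis
    proof (cases "B = {}")
      case True
      then have "ennreal_of_enat (kappa mu eps s V x) \<le> of_nat K"
        by (intro kappa_le_B) auto
      then show ?thesis
        by (simp add: add_increasing2)
    next
      case False
      define N where "N = Max B"
      have "N \<in> B"
        using False \<open>finite B\<close> by (simp add: N_def)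
      then have "K \<le> N"
        by (simp add: B_def)
      have "ennreal_of_enat (kappa mu eps s V x) \<le> of_nat (Suc N)"
        using Max_ge[OF \<open>finite B\<close>] \<open>K \<le> N\<close>
        by (intro kappa_le_B) (auto simp: N_def not_less_eq_eq[symmetric])
      also have "\<dots> \<le> of_nat K + ennreal (real N)"
        using \<open>K \<ge> 1\<close> by (simp add: ennreal_of_nat_eq_real_of_nat flip: ennreal_plus)
      also have "\<dots> \<le> of_nat K + S"
        using ennreal_le_suminf[of "\<lambda>n. ennreal (if n \<in> B then real n else 0)" N] \<open>N \<in> B\<close>
        unfolding S_def by (intro add_left_mono) simp
      finally show ?thesis .
    qed
  qed simp
  then show ?thesis
    unfolding S_def B_def by simp
qed

lemma nn_integral_exceedance_le_moment:
  fixes X :: "'a \<Rightarrow> real" and t b q :: real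
  assumes "X \<in> borel_measurable M" "t > 0" "b \<ge> 0" "q > 0"
  shows "(\<integral>\<^sup>+ x. ennreal (if t < X x then b else 0) \<partial>M)
           \<le> ennreal (b / t powr q) * (\<integral>\<^sup>+ x. ennreal (X x powr q) \<partial>M)"
proof -
  have "(if t < y then b else 0) \<le> b / t powr q * y powr q" for y
  proof (cases "t < y")
    case True
    then have "t powr q \<le> y powr q"
      using assms by (intro powr_mono2) auto
    then show ?thesis
      using True assms by (simp add: field_simps mult_left_mono)
  qed (use assms in simp)
  then have "(\<integral>\<^sup>+ x. ennreal (if t < X x then b else 0) \<partial>M)
               \<le> (\<integral>\<^sup>+ x. ennreal (b / t powr q) * ennreal (X x powr q) \<partial>M)"
    using assms by (intro nn_integral_mono) (simp flip: ennreal_mult')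
  also have "\<dots> = ennreal (b / t powr q) * (\<integral>\<^sup>+ x. ennreal (X x powr q) \<partial>M)"
    using assms by (intro nn_integral_cmult) measurable
  finally show ?thesis .
qed

lemma nn_integral_exceedance_at_multiple_le:
  fixes X :: "'a \<Rightarrow> real"
  assumes "X \<in> borel_measurable M" "(\<integral>\<^sup>+ x. ennreal (X x powr q) \<partial>M) \<le> ennreal Q"
    and "q > 0" "r > 0" "n > 0"
  shows "(\<integral>\<^sup>+ x. ennreal (if real n * r < X x then real n else 0) \<partial>M)
           \<le> ennreal (r powr - q * Q * real n powr (1 - q))"
proof -
  have weight: "real n / (real n * r) powr q * Q = r powr - q * Q * real n powr (1 - q)"
    using assms by (simp add: powr_mult powr_diff powr_minus field_simps)
  have "(\<integral>\<^sup>+ x. ennreal (if real n * r < X x then real n else 0) \<partial>M)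
      \<le> ennreal (real n / (real n * r) powr q) * (\<integral>\<^sup>+ x. ennreal (X x powr q) \<partial>M)"
    using assms by (intro nn_integral_exceedance_le_moment) auto
  also have "\<dots> \<le> ennreal (real n / (real n * r) powr q) * ennreal Q"
    using assms(2) by (rule mult_left_mono) simp
  also have "\<dots> = ennreal (r powr - q * Q * real n powr (1 - q))"
    unfolding weight[symmetric] by (rule ennreal_mult'[symmetric]) simp
  finally show ?thesis .
qed

lemma suminf_nn_integral_exceedances_le:
  fixes V :: "nat \<Rightarrow> 'a \<Rightarrow> real"
  assumes "\<And>n. V (Suc n) \<in> borel_measurable M"
    and "\<And>n. (\<integral>\<^sup>+ x. ennreal (V (Suc n) x powr q) \<partial>M) \<le> ennreal Q"
    and "Q \<ge> 0" "q > 2" "r > 0" "m > 0"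
  shows "(\<Sum>n. \<integral>\<^sup>+ x. ennreal (if Suc m \<le> n \<and> real n * r < V (Suc n) x then real n else 0) \<partial>M)
           \<le> ennreal (r powr - q * Q * (real m powr (2 - q) / (q - 2)))"
proof -
  define Cst where "Cst = r powr - q * Q"
  define g where "g n = ennreal (if Suc m \<le> n then real n powr - (q - 1) else 0)" for n
  have "Cst \<ge> 0"
    using assms by (simp add: Cst_def)
  have term_le: "(\<integral>\<^sup>+ x. ennreal (if Suc m \<le> n \<and> real n * r < V (Suc n) x then real n else 0) \<partial>M)
      \<le> ennreal Cst * g n" for n
  proof (cases "Suc m \<le> n")
    case True
    then have "(\<integral>\<^sup>+ x. ennreal (if Suc m \<le> n \<and> real n * r < V (Suc n) x then real n else 0) \<partial>M)
        \<le> ennreal (Cst * real n powr (1 - q))"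
      unfolding Cst_def using assms by (simp add: nn_integral_exceedance_at_multiple_le)
    then show ?thesis
      using True \<open>Cst \<ge> 0\<close> by (simp add: g_def ennreal_mult)
  qed (simp add: g_def)
  have "(\<Sum>n. g n) \<le> ennreal (real m powr (1 - (q - 1)) / (q - 1 - 1))"
    unfolding g_def using assms by (intro suminf_powr_tail_le) simp_all
  then have tail: "(\<Sum>n. g n) \<le> ennreal (real m powr (2 - q) / (q - 2))"
    by (simp add: algebra_simps)
  have "(\<Sum>n. \<integral>\<^sup>+ x. ennreal (if Suc m \<le> n \<and> real n * r < V (Suc n) x then real n else 0) \<partial>M)
      \<le> (\<Sum>n. ennreal Cst * g n)"
    using term_le by (intro suminf_le summableI)
  also have "\<dots> = ennreal Cst * (\<Sum>n. g n)"
    by (rule ennreal_suminf_cmult)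
  also have "\<dots> \<le> ennreal Cst * ennreal (real m powr (2 - q) / (q - 2))"
    using tail by (rule mult_left_mono) simp
  also have "\<dots> = ennreal (Cst * (real m powr (2 - q) / (q - 2)))"
    using \<open>Cst \<ge> 0\<close> by (rule ennreal_mult'[symmetric])
  finally show ?thesis
    unfolding Cst_def .
qed

lemma (in prob_space) nn_integral_kappa_le:
  assumes meas: "\<And>n. V (Suc n) \<in> borel_measurable M"
    and "\<And>n. (\<integral>\<^sup>+ x. ennreal (V (Suc n) x powr q) \<partial>M) \<le> ennreal Q"
    and "Q \<ge> 0" "q > 2" "eps < mu" "s > 0" "m > 0"
  shows "(\<integral>\<^sup>+ x. ennreal_of_enat (kappa mu eps s V x) \<partial>M)
           \<le> ennreal (real (Suc m) + (real s / (mu - eps)) powr q * Q * (real m powr (2 - q) / (q - 2)))"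
proof -
  define r where "r = (mu - eps) / real s"
  define f where "f n x = ennreal (if Suc m \<le> n \<and> real n * r < V (Suc n) x then real n else 0)"
    for n x
  have "r > 0"
    using assms by (simp add: r_def)
  have r_powr: "r powr - q = (real s / (mu - eps)) powr q"
    using assms by (simp add: r_def powr_minus powr_divide)
  have [measurable]: "V (Suc n) \<in> borel_measurable M" "f n \<in> borel_measurable M" for n
    using meas unfolding f_def by measurable
  have series: "(\<Sum>n. \<integral>\<^sup>+ x. f n x \<partial>M) \<le> ennreal (r powr - q * Q * (real m powr (2 - q) / (q - 2)))"
    unfolding f_def using assms \<open>r > 0\<close> by (intro suminf_nn_integral_exceedances_le)
  have "(\<integral>\<^sup>+ x. ennreal_of_enat (kappa mu eps s V x) \<partial>M)
      \<le> (\<integral>\<^sup>+ x. of_nat (Suc m) + (\<Sum>n. f n x) \<partial>M)"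
    unfolding f_def r_def times_divide_eq_right by (intro nn_integral_mono kappa_le_sum_exceedances) simp
  also have "\<dots> = of_nat (Suc m) + (\<Sum>n. \<integral>\<^sup>+ x. f n x \<partial>M)"
    by (simp add: nn_integral_add nn_integral_suminf emeasure_space_1)
  also have "\<dots> \<le> of_nat (Suc m) + ennreal (r powr - q * Q * (real m powr (2 - q) / (q - 2)))"
    using series by (rule add_left_mono)
  also have "\<dots> = ennreal (real (Suc m) + (real s / (mu - eps)) powr q * Q * (real m powr (2 - q) / (q - 2)))"
    using assms by (simp add: r_powr ennreal_of_nat_eq_real_of_nat ennreal_plus)
  finally show ?thesis .
qed

lemma exists_balancing_index:
  fixes s A q :: real
  assumes "s \<ge> 1" "A \<ge> 0" "q > 2"
  shows "\<exists>m>0. real (Suc m) + s powr q * A * real m powr (2 - q) \<le> (3 + A) * s powr (q / (q - 1))"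
proof -
  define a where "a = s powr (q / (q - 1))"
  define m where "m = nat \<lceil>a\<rceil>"
  have "a \<ge> 1"
    using assms by (simp add: a_def ge_one_powr_ge_zero)
  then have "a \<le> real m" "real m < a + 1"
    by (simp_all add: m_def) linarith+
  have "s powr q * a powr (2 - q) = a"
    using assms by (simp add: a_def powr_powr field_simps flip: powr_add)
  moreover have "real m powr (2 - q) \<le> a powr (2 - q)"
    using \<open>a \<le> real m\<close> \<open>a \<ge> 1\<close> assms by (intro powr_mono2') auto
  ultimately have "s powr q * A * real m powr (2 - q) \<le> A * a"
    using assms by (metis mult.commute mult.left_commute mult_left_mono powr_ge_zero)
  moreover have "m > 0"
    using \<open>a \<le> real m\<close> \<open>a \<ge> 1\<close> by simp
  ultimately show ?thesis
    using \<open>real m < a + 1\<close> \<open>a \<ge> 1\<close> by (intro exI[of _ m]) (simp add: a_def algebra_simps)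
qed

lemma (in prob_space) nn_integral_kappa_le_powr:
  assumes "\<And>n. V (Suc n) \<in> borel_measurable M"
    and "\<And>n. (\<integral>\<^sup>+ x. ennreal (V (Suc n) x powr q) \<partial>M) \<le> ennreal Q"
    and "Q \<ge> 0" "q > 2" "eps < mu" "s \<ge> 1"
  shows "(\<integral>\<^sup>+ x. ennreal_of_enat (kappa mu eps s V x) \<partial>M)
           \<le> ennreal ((3 + (1 / (mu - eps)) powr q * Q / (q - 2)) * real s powr (q / (q - 1)))"
proof -
  define A where "A = (1 / (mu - eps)) powr q * Q / (q - 2)"
  have "A \<ge> 0"
    using assms by (simp add: A_def)
  then obtain m where "m > 0"
    and balance: "real (Suc m) + real s powr q * A * real m powr (2 - q) \<le> (3 + A) * real s powr (q / (q - 1))"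
    using exists_balancing_index[of "real s" A q] assms by auto
  have A_eq: "(real s / (mu - eps)) powr q * Q * (real m powr (2 - q) / (q - 2))
      = real s powr q * A * real m powr (2 - q)"
    using assms by (simp add: A_def powr_divide field_simps)
  have "(\<integral>\<^sup>+ x. ennreal_of_enat (kappa mu eps s V x) \<partial>M)
      \<le> ennreal (real (Suc m) + (real s / (mu - eps)) powr q * Q * (real m powr (2 - q) / (q - 2)))"
    using assms \<open>m > 0\<close> by (intro nn_integral_kappa_le) simp_all
  also have "\<dots> \<le> ennreal ((3 + A) * real s powr (q / (q - 1)))"
    unfolding A_eq using balance by (rule ennreal_leI)
  finally show ?thesis
    unfolding A_def .
qed

lemma nn_integral_comp_eq_if_distr_eq:
  assumes "distr M N X = distr M N Y" "X \<in> measurable M N" "Y \<in> measurable M N"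
    and "g \<in> borel_measurable N"
  shows "(\<integral>\<^sup>+ x. g (X x) \<partial>M) = (\<integral>\<^sup>+ x. g (Y x) \<partial>M)"
proof -
  have "(\<integral>\<^sup>+ x. g (X x) \<partial>M) = (\<integral>\<^sup>+ y. g y \<partial>distr M N X)"
    using assms(2,4) by (simp add: nn_integral_distr)
  also have "\<dots> = (\<integral>\<^sup>+ x. g (Y x) \<partial>M)"
    unfolding assms(1) using assms(3,4) by (simp add: nn_integral_distr)
  finally show ?thesis .
qed

theorem mainTheorem11:
  fixes M :: "'a measure" and V :: "nat \<Rightarrow> 'a \<Rightarrow> real"
    and mu eps q :: real
  assumes "prob_space M"
    and rv: "\<And>n. n \<ge> 1 \<Longrightarrow> V n \<in> borel_measurable M"
    and indep: "prob_space.indep_vars M (\<lambda>_. borel) V {1..}"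
    and ident: "\<And>n. n \<ge> 1 \<Longrightarrow> distr M borel (V n) = distr M borel (V 1)"
    and nonneg: "\<And>n x. n \<ge> 1 \<Longrightarrow> x \<in> space M \<Longrightarrow> V n x \<ge> 0"
    and mu: "mu > 0"
    and eps: "0 < eps" "eps < mu"
    and q: "q > 2"
    and moment: "integrable M (\<lambda>x. V 1 x powr q)"
  shows "\<exists>C::real. \<exists>s0::nat. \<forall>s\<ge>s0.
           (\<integral>\<^sup>+ x. ennreal_of_enat (kappa mu eps s V x) \<partial>M)
             \<le> ennreal (C * real s powr (q / (q - 1)))"
proof -
  interpret prob_space M by fact
  have [measurable]: "V (Suc n) \<in> borel_measurable M" for n
    using rv by simp
  define Q where "Q = (\<integral>x. V 1 x powr q \<partial>M)"
  have "Q \<ge> 0"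
    by (simp add: Q_def)
  have "(\<integral>\<^sup>+ x. ennreal (V (Suc n) x powr q) \<partial>M) = ennreal Q" for n
    using nn_integral_comp_eq_if_distr_eq[OF ident[of "Suc n"], of "\<lambda>y. ennreal (y powr q)"] rv[of 1] moment
    by (simp add: Q_def nn_integral_eq_integral)
  then have "\<forall>s\<ge>1. (\<integral>\<^sup>+ x. ennreal_of_enat (kappa mu eps s V x) \<partial>M)
      \<le> ennreal ((3 + (1 / (mu - eps)) powr q * Q / (q - 2)) * real s powr (q / (q - 1)))"
    using \<open>Q \<ge> 0\<close> q eps by (intro allI impI nn_integral_kappa_le_powr) simp_all
  then show ?thesis
    by blast
qed

end
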